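(* Suppose $B^2(\mathcal Z)\subseteq\underline{\mathcal Z}$. Let $H:\underline{\mathcal Z}\to\mathcal Y$ be a linear functional that has the minimal FMP and is minimally continuous. Let $\mathcal Y_0$ be the closure of $\operatorname{span}(H(\underline{\mathcal Z}))$ in $\mathcal Y$, and let $\mathbb H$ be the reproducing kernel Hilbert space associated to the kernel $K_H(\underline z^1,\underline z^2)=\langle H(\underline z^1),H(\underline z^2)\rangle_{\mathcal Y}$ on $\underline{\mathcal Z}$. Then $\mathbb H$ embeds linearly (injectively) into $\ell^2(\mathcal Z)^*$ via the map sending $f\in\mathbb H$ to the unique linear extension of $f|_{B^2(\mathcal Z)}$ to $\ell^2(\mathcal Z)$, and $\operatorname{span}(H(B^2(\mathcal Z)))$ is dense in $\mathcal Y_0$. Furthermore, if the restriction $H|_{B^2(\mathcal Z)}$ is orthogonal, i.e. $\langle H(\underline z^1),H(\underline z^2)\rangle_{\mathcal Y}=\langle\underline z^1,\underline z^2\rangle_{\ell^2(\mathcal Z)}$ for all $\underline z^1,\underline z^2\in B^2(\mathcal Z)$, then this embedding is an isometric isomorphism of Hilbert spaces $(\mathbb H,\langle\cdot,\cdot\rangle_{\mathbb H})\to(\ell^2(\mathcal Z)^*,\langle\cdot,\cdot\rangle_{\ell^2(\mathcal Z)^*})$, and $\operatorname{span}(H(B^2(\mathcal Z)))=\mathcal Y_0$.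
   Context: $(\mathcal Z,\langle\cdot,\cdot\rangle_{\mathcal Z})$ and $(\mathcal Y,\langle\cdot,\cdot\rangle_{\mathcal Y})$ are real Hilbert spaces with induced norms $\|\cdot\|$, $\|\cdot\|_{\mathcal Y}$; $\mathcal B$ is the closed unit ball of $\mathcal Z$. Let $\mathbb Z_-=\{0,-1,-2,\dots\}$; elements of $\mathcal Z^{\mathbb Z_-}$ are sequences $\underline z=(z_t)_{t\le0}$. For $t\in\mathbb Z_-$, $\delta^t:\mathcal Z\to\mathcal Z^{\mathbb Z_-}$ maps $z$ to the sequence with entry $z$ at time $t$ and $0$ elsewhere. Standing assumption: $\underline{\mathcal Z}\subseteq\mathcal Z^{\mathbb Z_-}$ is a set such that (a) $\underline{\mathcal Z}$ is convex and $\underline{\mathcal Z}=-\underline{\mathcal Z}$; (b) $\delta^t(\mathcal B)\subseteq\underline{\mathcal Z}$ for all $t\in\mathbb Z_-$; (c) for every $\underline z\in\underline{\mathcal Z}$ and $J\subseteq\mathbb Z_-$, the sequence $\sum_{t\in J}\delta^t(z_t)$ (equal to $z_t$ for $t\in J$ and $0$ elsewhere) belongs to $\underline{\mathcal Z}$. A functional $H:\underline{\mathcal Z}\to\mathcal Y$ is linear if it is the restriction of a linear map on $\operatorname{span}(\underline{\mathcal Z})$. $\ell^2(\mathcal Z)$ is the Hilbert space of sequences with $\sum_{t\le0}\|z_t\|^2<\infty$ and inner product $\langle\underline z^1,\underline z^2\rangle_{\ell^2(\mathcal Z)}=\sum_{t\le0}\langle z^1_t,z^2_t\rangle_{\mathcal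 Z}$; $B^2(\mathcal Z)$ is its closed unit ball; $\ell^2(\mathcal Z)^*$ is its continuous dual with the inner product transported via the Riesz representation theorem. $H$ is minimally continuous if $H\circ\delta^t:\mathcal B\to\mathcal Y$ is continuous for every $t$; $H$ has the minimal FMP if $H(\sum_{t=T}^0\delta^t(z_t))\to H(\underline z)$ as $T\to-\infty$ for every $\underline z\in\underline{\mathcal Z}$. *)

theory Defs
  imports "HOL-Analysis.Analysis" "HOL-Library.Function_Algebras"
begin

instantiation "fun" :: (type, real_vector) real_vector
begin
definition scaleR_fun :: "real \<Rightarrow> ('a \<Rightarrow> 'b) \<Rightarrow> 'a \<Rightarrow> 'b"
  where "scaleR_fun c f = (\<lambda>x. c *\<^sub>R f x)"
instance
  by standard (simp_all add: scaleR_fun_def fun_eq_iff plus_fun_def scaleR_add_right scaleR_add_left)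
end

text \<open>A sequence (z_t) for t in Z_- is encoded as a function nat to Z,
  the value at n being z_{-n}.\<close>

type_synonym 'z seq = "nat \<Rightarrow> 'z"

definition delta :: "nat \<Rightarrow> 'z::zero \<Rightarrow> 'z seq" where
  "delta n z = (\<lambda>m. if m = n then z else 0)"

text \<open>Restriction of a sequence to an index set J, i.e. the sum over t in J of delta^t(z_t).\<close>
definition restrict_seq :: "nat set \<Rightarrow> 'z::zero seq \<Rightarrow> 'z seq" where
  "restrict_seq J z = (\<lambda>m. if m \<in> J then z m else 0)"

text \<open>Truncation: the sum from t = -N to 0 of delta^t(z_t).\<close>
definition trunc_seq :: "nat \<Rightarrow> 'z::zero seq \<Rightarrow> 'z seq" where
  "trunc_seq N z = restrict_seq {..N} z"

definition standing_assumption :: "'z::real_normed_vector seq set \<Rightarrow> bool" where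
  "standing_assumption Zs \<longleftrightarrow>
     convex Zs \<and> Zs = uminus ` Zs \<and>
     (\<forall>n. \<forall>z\<in>cball 0 1. delta n z \<in> Zs) \<and>
     (\<forall>z\<in>Zs. \<forall>J. restrict_seq J z \<in> Zs)"

definition linear_functional :: "'z::real_vector seq set \<Rightarrow> ('z seq \<Rightarrow> 'y::real_vector) \<Rightarrow> bool" where
  "linear_functional Zs H \<longleftrightarrow>
     (\<exists>L. (\<forall>x\<in>span Zs. \<forall>y\<in>span Zs. \<forall>a b. L (a *\<^sub>R x + b *\<^sub>R y) = a *\<^sub>R L x + b *\<^sub>R L y)
          \<and> (\<forall>z\<in>Zs. H z = L z))"

definition minimally_continuous :: "('z::real_normed_vector seq \<Rightarrow> 'y::topological_space) \<Rightarrow> bool" where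
  "minimally_continuous H \<longleftrightarrow> (\<forall>n. continuous_on (cball 0 1) (H \<circ> delta n))"

definition minimal_FMP :: "'z::real_normed_vector seq set \<Rightarrow> ('z seq \<Rightarrow> 'y::topological_space) \<Rightarrow> bool" where
  "minimal_FMP Zs H \<longleftrightarrow> (\<forall>z\<in>Zs. (\<lambda>N. H (trunc_seq N z)) \<longlonglongrightarrow> H z)"

definition l2 :: "'z::real_inner seq set" where
  "l2 = {z. summable (\<lambda>n. (norm (z n))\<^sup>2)}"

definition l2_inner :: "'z::real_inner seq \<Rightarrow> 'z seq \<Rightarrow> real" where
  "l2_inner z1 z2 = (\<Sum>n. inner (z1 n) (z2 n))"

definition l2_norm :: "'z::real_inner seq \<Rightarrow> real" where
  "l2_norm z = sqrt (\<Sum>n. (norm (z n))\<^sup>2)"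

definition B2 :: "'z::real_inner seq set" where
  "B2 = {z \<in> l2. l2_norm z \<le> 1}"

text \<open>Continuous linear functionals on l2(Z), represented as real-valued functions
  on sequences that vanish outside l2.\<close>
definition l2_dual :: "('z::real_inner seq \<Rightarrow> real) set" where
  "l2_dual = {L. (\<forall>z. z \<notin> l2 \<longrightarrow> L z = 0)
     \<and> (\<forall>x\<in>l2. \<forall>y\<in>l2. \<forall>a b. L (a *\<^sub>R x + b *\<^sub>R y) = a * L x + b * L y)
     \<and> (\<exists>C. \<forall>z\<in>l2. \<bar>L z\<bar> \<le> C * l2_norm z)}"

definition riesz_rep :: "('z::real_inner seq \<Rightarrow> real) \<Rightarrow> 'z seq" where
  "riesz_rep L = (THE r. r \<in> l2 \<and> (\<forall>z\<in>l2. L z = l2_inner z r))"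

definition l2_dual_inner :: "('z::real_inner seq \<Rightarrow> real) \<Rightarrow> ('z seq \<Rightarrow> real) \<Rightarrow> real" where
  "l2_dual_inner L1 L2 = l2_inner (riesz_rep L1) (riesz_rep L2)"

definition l2_ext :: "('z::real_inner seq \<Rightarrow> real) \<Rightarrow> ('z seq \<Rightarrow> real)" where
  "l2_ext f = (THE L. (\<forall>z. z \<notin> l2 \<longrightarrow> L z = 0)
     \<and> (\<forall>x\<in>l2. \<forall>y\<in>l2. \<forall>a b. L (a *\<^sub>R x + b *\<^sub>R y) = a * L x + b * L y)
     \<and> (\<forall>z\<in>B2. L z = f z))"

text \<open>(F, ip) is a reproducing kernel Hilbert space of real functions on X with kernel K.
  Functions are identified with their extension by 0 outside X.\<close>
definition is_RKHS :: "'a set \<Rightarrow> ('a \<Rightarrow> 'a \<Rightarrow> real) \<Rightarrow> ('a \<Rightarrow> real) set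
                        \<Rightarrow> (('a \<Rightarrow> real) \<Rightarrow> ('a \<Rightarrow> real) \<Rightarrow> real) \<Rightarrow> bool" where
  "is_RKHS X K F ip \<longleftrightarrow>
     (\<forall>f\<in>F. \<forall>x. x \<notin> X \<longrightarrow> f x = 0)
   \<and> subspace F
   \<and> (\<forall>f\<in>F. \<forall>g\<in>F. ip f g = ip g f)
   \<and> (\<forall>f\<in>F. \<forall>g\<in>F. \<forall>h\<in>F. \<forall>a b. ip (a *\<^sub>R f + b *\<^sub>R g) h = a * ip f h + b * ip g h)
   \<and> (\<forall>f\<in>F. ip f f \<ge> 0)
   \<and> (\<forall>f\<in>F. ip f f = 0 \<longrightarrow> f = 0)
   \<and> (\<forall>s. (\<forall>n. s n \<in> F) \<and> (\<forall>e>0. \<exists>M. \<forall>m\<ge>M. \<forall>n\<ge>M. sqrt (ip (s m - s n) (s m - s n)) < e)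
          \<longrightarrow> (\<exists>f\<in>F. (\<lambda>n. sqrt (ip (s n - f) (s n - f))) \<longlonglongrightarrow> 0))
   \<and> (\<forall>x\<in>X. (\<lambda>y. if y \<in> X then K y x else 0) \<in> F)
   \<and> (\<forall>f\<in>F. \<forall>x\<in>X. f x = ip f (\<lambda>y. if y \<in> X then K y x else 0))"

end

theory Submission
  imports Defs
begin

(* Every f in the RKHS is reproduced by the feature sections y \<mapsto> <H y, w>. With L the linear
   map that H restricts, x \<mapsto> <f, <H -, L x>> is therefore a linear extension of f from
   Zs \<inter> l2 to all of l2. The minimal FMP makes it continuous along truncations and minimal
   continuity bounds it on each coordinate, so the Riesz theorem in every coordinate together
   with Landau's theorem (if \<Sum> <z n, a n> converges for all z in l2, then a is in l2) writes it
   as <-, a>, an element of the dual. Since |f x - f y| \<le> |f| |H x - H y|, the minimal FMP also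
   shows that an f vanishing on B2 vanishes everywhere and that H(Zs) lies in the closure of
   span H(B2). If H is isometric on B2, then so is L on l2: the feature section of L r is a
   preimage of <-, r>, and for y in the closure, y - L r is orthogonal to span H(B2) when r
   represents x \<mapsto> <L x, y>, whence y = L r. *)

section \<open>Minimal norms and the Riesz representation\<close>

lemma parallelogram_law:
  fixes x y :: "'a::real_inner"
  shows "(norm (x + y))\<^sup>2 + (norm (x - y))\<^sup>2 = 2 * (norm x)\<^sup>2 + 2 * (norm y)\<^sup>2"
  by (simp add: power2_norm_eq_inner inner_add_left inner_add_right inner_diff_left
      inner_diff_right inner_commute)

lemma Cauchy_if_min_norm_sequence:
  fixes A :: "'a::real_inner set"
  assumes "convex A" and vA: "\<And>k. v k \<in> A" and d_le: "\<And>w. w \<in> A \<Longrightarrow> d \<le> (norm w)\<^sup>2"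
    and v_less: "\<And>k. (norm (v k))\<^sup>2 < d + 1 / Suc k"
  shows "Cauchy v"
proof (rule metric_CauchyI)
  have dist_v: "(dist (v j) (v k))\<^sup>2 \<le> 4 / Suc N" if "N \<le> j" "N \<le> k" for j k N
  proof -
    have "(1/2) *\<^sub>R (v j + v k) \<in> A"
      using \<open>convex A\<close> vA[of j] vA[of k] by (simp add: convexD scaleR_add_right)
    then have "4 * d \<le> (norm (v j + v k))\<^sup>2"
      using d_le by (fastforce simp: power_divide)
    moreover have "1 / Suc j \<le> 1 / Suc N" "1 / Suc k \<le> 1 / Suc N"
      using that by (simp_all add: frac_le)
    ultimately show ?thesis
      using parallelogram_law[of "v j" "v k"] v_less[of j] v_less[of k] by (simp add: dist_norm)
  qed
  fix e :: real assume "e > 0"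
  then obtain N where "inverse (real (Suc N)) < e\<^sup>2 / 4"
    using reals_Archimedean[of "e\<^sup>2 / 4"] by auto
  then have "4 / Suc N < e\<^sup>2"
    by (simp add: field_simps)
  then have "dist (v j) (v k) < e" if "N \<le> j" "N \<le> k" for j k
    using dist_v[OF that] \<open>e > 0\<close> by (simp add: power2_less_imp_less)
  then show "\<exists>N. \<forall>j\<ge>N. \<forall>k\<ge>N. dist (v j) (v k) < e" by blast
qed

lemma convex_closed_min_norm_exists:
  fixes A :: "'a::{real_inner, complete_space} set"
  assumes "convex A" "closed A" "A \<noteq> {}"
  obtains u where "u \<in> A" "\<And>w. w \<in> A \<Longrightarrow> norm u \<le> norm w"
proof -
  define d where "d = Inf ((\<lambda>v. (norm v)\<^sup>2) ` A)"
  have d_le: "d \<le> (norm w)\<^sup>2" if "w \<in> A" for w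
    unfolding d_def using that by (intro cInf_lower bdd_belowI[of _ 0]) auto
  have "\<exists>v\<in>A. (norm v)\<^sup>2 < d + 1 / Suc k" for k :: nat
    using cInf_lessD[of "(\<lambda>v. (norm v)\<^sup>2) ` A" "d + 1 / Suc k"] \<open>A \<noteq> {}\<close>
    unfolding d_def by auto
  then obtain v where vA: "\<And>k. v k \<in> A" and v_less: "\<And>k. (norm (v k))\<^sup>2 < d + 1 / Suc k"
    by metis
  then obtain u where vu: "v \<longlonglongrightarrow> u"
    using Cauchy_if_min_norm_sequence[OF \<open>convex A\<close> vA d_le v_less] Cauchy_convergent_iff
      convergent_def by blast
  have "u \<in> A"
    using \<open>closed A\<close> vA vu closed_sequentially by blast
  moreover have "(norm u)\<^sup>2 \<le> d"
  proof (rule tendsto_le[OF sequentially_bot])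
    show "(\<lambda>k. d + 1 / Suc k) \<longlonglongrightarrow> d"
      using tendsto_add[OF tendsto_const LIMSEQ_Suc[OF lim_inverse_n']] by simp
    show "(\<lambda>k. (norm (v k))\<^sup>2) \<longlonglongrightarrow> (norm u)\<^sup>2"
      by (intro tendsto_intros vu)
    show "\<forall>\<^sub>F k in sequentially. (norm (v k))\<^sup>2 \<le> d + 1 / Suc k"
      using v_less by (intro always_eventually allI less_imp_le)
  qed
  then have "norm u \<le> norm w" if "w \<in> A" for w
    using d_le[OF that] by (simp add: power2_le_imp_le)
  ultimately show ?thesis using that by blast
qed

lemma orthogonal_if_norm_le_add_scaleR:
  fixes u w :: "'a::real_inner"
  assumes "\<And>t. norm u \<le> norm (u + t *\<^sub>R w)"
  shows "inner u w = 0"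
proof (cases "w = 0")
  case False
  define t where "t = - inner u w / (norm w)\<^sup>2"
  have "(norm u)\<^sup>2 \<le> (norm (u + t *\<^sub>R w))\<^sup>2"
    using assms[of t] by (simp add: power_mono)
  also have "\<dots> = (norm u)\<^sup>2 + 2 * t * inner u w + t\<^sup>2 * (norm w)\<^sup>2"
    unfolding power2_norm_eq_inner
    by (simp add: inner_add_left inner_add_right inner_commute power2_eq_square algebra_simps)
  also have "\<dots> = (norm u)\<^sup>2 - (inner u w)\<^sup>2 / (norm w)\<^sup>2"
    using False by (simp add: t_def power2_eq_square field_simps)
  finally show ?thesis using False by (simp add: divide_le_0_iff)
qed simp

lemma riesz_representation:
  fixes \<phi> :: "'a::{real_inner, complete_space} \<Rightarrow> real"
  assumes "bounded_linear \<phi>"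
  obtains a where "\<And>v. \<phi> v = inner v a"
proof (cases "\<forall>v. \<phi> v = 0")
  case True
  then show ?thesis using that[of 0] by simp
next
  case False
  interpret \<phi>: bounded_linear \<phi> by fact
  obtain v0 where "\<phi> v0 \<noteq> 0" using False by blast
  then have "v0 /\<^sub>R \<phi> v0 \<in> \<phi> -` {1}"
    by (simp add: \<phi>.scale)
  then have "\<phi> -` {1} \<noteq> {}"
    by blast
  moreover have "convex (\<phi> -` {1})"
    by (rule convex_linear_vimage) (simp_all add: \<phi>.linear_axioms)
  moreover have "closed (\<phi> -` {1})"
    by (rule continuous_closed_vimage[OF closed_singleton]) (rule \<phi>.isCont[OF continuous_ident])
  ultimately obtain u where u: "\<phi> u = 1" and u_min: "\<And>w. \<phi> w = 1 \<Longrightarrow> norm u \<le> norm w"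
    using convex_closed_min_norm_exists[of "\<phi> -` {1}"] by (metis vimage_singleton_eq)
  have u_orth: "inner u w = 0" if "\<phi> w = 0" for w
    using u_min u that by (intro orthogonal_if_norm_le_add_scaleR) (simp add: \<phi>.add \<phi>.scale)
  have "u \<noteq> 0" using u \<phi>.zero by auto
  show ?thesis
  proof (rule that)
    fix v
    have "inner u (v - \<phi> v *\<^sub>R u) = 0"
      using u by (intro u_orth) (simp add: \<phi>.diff \<phi>.scale)
    then have "inner v u = \<phi> v * (norm u)\<^sup>2"
      by (simp add: inner_diff_right power2_norm_eq_inner inner_commute)
    then show "\<phi> v = inner v (u /\<^sub>R (norm u)\<^sup>2)"
      using \<open>u \<noteq> 0\<close> by simp
  qed
qed

lemma subspace_closure:
  fixes S :: "'a::real_normed_vector set"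
  assumes "subspace S"
  shows "subspace (closure S)"
  unfolding subspace_def
proof (intro conjI ballI allI)
  show "0 \<in> closure S"
    using assms closure_subset subspace_0 by blast
  have "S + S \<subseteq> S"
    using assms by (auto simp: set_plus_def subspace_add)
  then have "closure S + closure S \<subseteq> closure S"
    using closure_sum[of S S] closure_mono[of "S + S" S] by blast
  then show "x + y \<in> closure S" if "x \<in> closure S" "y \<in> closure S" for x y
    using that set_plus_intro by blast
  fix c x assume "x \<in> closure S"
  have "(*\<^sub>R) c ` S \<subseteq> S"
    using assms by (auto simp: subspace_scale)
  then have "(*\<^sub>R) c ` closure S \<subseteq> closure S"
    using closure_scaleR[of c S] closure_mono[of "(*\<^sub>R) c ` S" S] by simp
  then show "c *\<^sub>R x \<in> closure S"
    using \<open>x \<in> closure S\<close> by blast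
qed

lemma orthogonal_closure_span:
  fixes v :: "'a::real_inner"
  assumes "\<And>s. s \<in> S \<Longrightarrow> inner s v = 0" and "w \<in> closure (span S)"
  shows "inner w v = 0"
proof -
  have "span S \<subseteq> {w. inner w v = 0}"
    using assms(1) by (intro span_minimal subspace_hyperplane2) auto
  moreover have "closed {w. inner w v = 0}"
    using closed_hyperplane[of v 0] by (simp add: inner_commute)
  ultimately have "closure (span S) \<subseteq> {w. inner w v = 0}"
    by (rule closure_minimal)
  then show ?thesis using assms(2) by blast
qed

lemma bounded_linear_if_continuous_on_cball:
  fixes f :: "'a::real_normed_vector \<Rightarrow> 'b::real_normed_vector"
  assumes "linear f" and "continuous_on (cball 0 1) f"
  shows "bounded_linear f"
proof -
  interpret f: linear f by fact
  obtain d where "0 < d" and d: "\<And>v. v \<in> cball 0 1 \<Longrightarrow> dist v 0 < d \<Longrightarrow> dist (f v) (f 0) < 1"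
    using assms(2) unfolding continuous_on_iff by (metis centre_in_cball zero_le_one zero_less_one)
  define e where "e = min d 1 / 2"
  have e: "0 < e" "e < d" "e \<le> 1" using \<open>0 < d\<close> by (auto simp: e_def)
  have "norm (f v) \<le> norm v * (1 / e)" for v
  proof (cases "v = 0")
    case False
    have "norm ((e / norm v) *\<^sub>R v) = e" using False e by simp
    then have "norm (f ((e / norm v) *\<^sub>R v)) < 1"
      using d[of "(e / norm v) *\<^sub>R v"] e by (simp add: dist_norm f.zero)
    then show ?thesis using False e by (simp add: f.scale field_simps)
  qed simp
  then show ?thesis
    by (intro bounded_linear_intro[where K = "1 / e"] f.add f.scale)
qed

lemma discriminant_le_if_quadratic_nonneg:
  fixes a b c :: real
  assumes nonneg: "\<And>t. 0 \<le> a + 2 * b * t + c * t\<^sup>2" and "0 \<le> c"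
  shows "b\<^sup>2 \<le> a * c"
proof (cases "c = 0")
  case True
  have "b = 0"
  proof (rule ccontr)
    assume "b \<noteq> 0"
    then have "a + 2 * b * (- (a + 1) / (2 * b)) + c * (- (a + 1) / (2 * b))\<^sup>2 = -1"
      using True by (simp add: field_simps)
    then show False using nonneg[of "- (a + 1) / (2 * b)"] by simp
  qed
  then show ?thesis using True by simp
next
  case False
  then have "0 < c" using \<open>0 \<le> c\<close> by simp
  have "a + 2 * b * (- b / c) + c * (- b / c)\<^sup>2 = a - b\<^sup>2 / c"
    using \<open>0 < c\<close> by (simp add: field_simps power2_eq_square)
  then have "b\<^sup>2 / c \<le> a" using nonneg[of "- b / c"] by simp
  then show ?thesis using \<open>0 < c\<close> by (simp add: field_simps)
qed

locale semi_inner_product_on =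
  fixes S :: "'a::real_vector set" and ip :: "'a \<Rightarrow> 'a \<Rightarrow> real"
  assumes subspace: "subspace S"
    and sym: "f \<in> S \<Longrightarrow> g \<in> S \<Longrightarrow> ip f g = ip g f"
    and linear_left: "f \<in> S \<Longrightarrow> g \<in> S \<Longrightarrow> h \<in> S \<Longrightarrow> ip (a *\<^sub>R f + b *\<^sub>R g) h = a * ip f h + b * ip g h"
    and nonneg: "f \<in> S \<Longrightarrow> 0 \<le> ip f f"
begin

lemma linear_right: "f \<in> S \<Longrightarrow> g \<in> S \<Longrightarrow> h \<in> S \<Longrightarrow> ip h (a *\<^sub>R f + b *\<^sub>R g) = a * ip h f + b * ip h g"
  using linear_left[of f g h a b] sym[of h] subspace
  by (simp add: subspace_add subspace_scale)

lemma diff_right: "f \<in> S \<Longrightarrow> g \<in> S \<Longrightarrow> h \<in> S \<Longrightarrow> ip h (f - g) = ip h f - ip h g"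
  using linear_right[of f g h 1 "-1"] by simp

lemma scaleR_left: "f \<in> S \<Longrightarrow> h \<in> S \<Longrightarrow> ip (c *\<^sub>R f) h = c * ip f h"
  using linear_left[of f f h c 0] by simp

lemma scaleR_right: "f \<in> S \<Longrightarrow> h \<in> S \<Longrightarrow> ip h (c *\<^sub>R f) = c * ip h f"
  using linear_right[of f f h c 0] by simp

lemma Cauchy_Schwarz:
  assumes "f \<in> S" "g \<in> S"
  shows "\<bar>ip f g\<bar> \<le> sqrt (ip f f) * sqrt (ip g g)"
proof -
  have "0 \<le> ip f f + 2 * ip f g * t + ip g g * t\<^sup>2" for t
  proof -
    have ftg: "1 *\<^sub>R f + t *\<^sub>R g \<in> S"
      using assms subspace by (simp add: subspace_add subspace_scale)
    have "ip (1 *\<^sub>R f + t *\<^sub>R g) (1 *\<^sub>R f + t *\<^sub>R g)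
        = 1 * ip f (1 *\<^sub>R f + t *\<^sub>R g) + t * ip g (1 *\<^sub>R f + t *\<^sub>R g)"
      by (rule linear_left[OF assms ftg])
    also have "\<dots> = ip f f + 2 * ip f g * t + ip g g * t\<^sup>2"
      unfolding linear_right[OF assms assms(1)] linear_right[OF assms assms(2)] sym[OF assms]
      by (simp add: power2_eq_square algebra_simps)
    finally show ?thesis using nonneg[OF ftg] by simp
  qed
  then have "(ip f g)\<^sup>2 \<le> ip f f * ip g g"
    by (rule discriminant_le_if_quadratic_nonneg) (rule nonneg[OF assms(2)])
  then show ?thesis
    by (metis real_sqrt_abs real_sqrt_le_mono real_sqrt_mult)
qed

end

section \<open>The Abel-Dini theorem\<close>

lemma partial_sums_unbounded:
  fixes b :: "nat \<Rightarrow> real"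
  assumes "\<And>n. 0 \<le> b n" and "\<not> summable b"
  obtains n where "M < (\<Sum>i<n. b i)"
  using summableI_nonneg_bounded[of b M] assms by (meson not_le)

lemma summable_divide_partial_sums_squared:
  fixes b :: "nat \<Rightarrow> real"
  assumes nonneg: "\<And>n. 0 \<le> b n" and "\<not> summable b"
  shows "summable (\<lambda>n. b n / (\<Sum>i\<le>n. b i)\<^sup>2)"
proof -
  define S where "S n = (\<Sum>i<n. b i)" for n
  have S_mono: "S m \<le> S n" if "m \<le> n" for m n
    unfolding S_def using that nonneg by (intro sum_mono2) auto
  obtain n0 where "0 < S n0"
    using partial_sums_unbounded[OF assms, of 0] unfolding S_def by blast
  then have S_pos: "0 < S n" if "n0 \<le> n" for n
    using S_mono[OF that] by simp
  define g where "g n = 1 / S n - 1 / S (Suc n)" for n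
  have g_bound: "b n / (S (Suc n))\<^sup>2 \<le> g n" if "n0 \<le> n" for n
  proof -
    have "0 < S n" "S n \<le> S (Suc n)" using S_pos[OF that] S_mono by auto
    then have "b n / (S (Suc n))\<^sup>2 \<le> b n / (S n * S (Suc n))"
      using nonneg[of n] by (intro divide_left_mono) (auto simp: power2_eq_square mult_right_mono)
    also have "\<dots> = g n"
      using \<open>0 < S n\<close> \<open>S n \<le> S (Suc n)\<close> by (simp add: g_def S_def field_simps)
    finally show ?thesis .
  qed
  have "summable (\<lambda>i. g (i + n0))"
  proof (rule summableI_nonneg_bounded)
    show "0 \<le> g (i + n0)" for i
      using g_bound[of "i + n0"] nonneg[of "i + n0"]
      by (meson divide_nonneg_nonneg le_add2 order_trans zero_le_power2)
    show "(\<Sum>i<N. g (i + n0)) \<le> 1 / S n0" for N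
      using sum_lessThan_telescope'[of "\<lambda>i. 1 / S (i + n0)" N] S_pos[of "N + n0"]
      by (simp add: g_def)
  qed
  then have "summable g"
    by simp
  then have "summable (\<lambda>n. b n / (S (Suc n))\<^sup>2)"
    by (rule summable_comparison_test'[where N = n0]) (simp add: g_bound nonneg)
  then show ?thesis
    by (simp add: S_def lessThan_Suc_atMost)
qed

lemma not_summable_divide_partial_sums:
  fixes b :: "nat \<Rightarrow> real"
  assumes nonneg: "\<And>n. 0 \<le> b n" and "\<not> summable b"
  shows "\<not> summable (\<lambda>n. b n / (\<Sum>i\<le>n. b i))"
proof
  define S where "S n = (\<Sum>i<n. b i)" for n
  have S_mono: "S m \<le> S n" if "m \<le> n" for m n
    unfolding S_def using that nonneg by (intro sum_mono2) auto
  assume "summable (\<lambda>n. b n / (\<Sum>i\<le>n. b i))"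
  then have "summable (\<lambda>n. b n / S (Suc n))"
    by (simp add: S_def lessThan_Suc_atMost)
  then obtain N where N: "\<And>n. \<bar>\<Sum>i\<in>{N..<n}. b i / S (Suc i)\<bar> < 1 / 2"
    unfolding summable_Cauchy by (metis half_gt_zero order_refl real_norm_def zero_less_one)
  have "0 \<le> S N" using S_mono[of 0 N] by (simp add: S_def)
  obtain k where k: "2 * S N < S k"
    using partial_sums_unbounded[OF assms] unfolding S_def by blast
  have "0 < S k"
    using k \<open>0 \<le> S N\<close> by linarith
  have "N \<le> k"
  proof (rule ccontr)
    assume "\<not> N \<le> k"
    then have "S k \<le> S N" by (intro S_mono) simp
    then show False using k \<open>0 \<le> S N\<close> by simp
  qed
  have "(S k - S N) / S k = (\<Sum>i\<in>{N..<k}. b i / S k)"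
    using sum_diff_nat_ivl[of 0 N k b] \<open>N \<le> k\<close>
    by (simp add: S_def atLeast0LessThan sum_divide_distrib)
  also have "\<dots> \<le> (\<Sum>i\<in>{N..<k}. b i / S (Suc i))"
  proof (rule sum_mono)
    fix i assume "i \<in> {N..<k}"
    then have "S (Suc i) \<le> S k" by (intro S_mono) auto
    moreover have "b i \<le> S (Suc i)"
      using S_mono[of 0 i] by (simp add: S_def)
    ultimately show "b i / S k \<le> b i / S (Suc i)"
      using nonneg[of i] by (cases "b i = 0") (auto intro: divide_left_mono)
  qed
  also have "\<dots> < 1 / 2" using N[of k] by linarith
  finally show False using k \<open>0 < S k\<close> by (simp add: field_simps)
qed

section \<open>The sequence space l2\<close>

lemma scaleR_fun_apply [simp]: "(c *\<^sub>R f) x = c *\<^sub>R f x"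
  by (simp add: scaleR_fun_def)

lemma mem_l2_iff: "z \<in> l2 \<longleftrightarrow> summable (\<lambda>n. (norm (z n))\<^sup>2)"
  by (simp add: l2_def)

lemma subspace_l2: "subspace l2"
  unfolding subspace_def
proof (intro conjI ballI allI)
  show "0 \<in> l2" by (simp add: mem_l2_iff)
next
  fix x y :: "'a seq" assume "x \<in> l2" "y \<in> l2"
  then have bound: "summable (\<lambda>n. 2 * (norm (x n))\<^sup>2 + 2 * (norm (y n))\<^sup>2)"
    by (intro summable_add summable_mult) (simp_all add: mem_l2_iff)
  have "(norm (x n + y n))\<^sup>2 \<le> 2 * (norm (x n))\<^sup>2 + 2 * (norm (y n))\<^sup>2" for n
    using parallelogram_law[of "x n" "y n"] zero_le_power2[of "norm (x n - y n)"] by linarith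
  then show "x + y \<in> l2"
    unfolding mem_l2_iff plus_fun_apply
    by (intro summable_comparison_test'[OF bound, where N = 0]) simp
next
  fix c :: real and x :: "'a seq" assume "x \<in> l2"
  then have "summable (\<lambda>n. c\<^sup>2 * (norm (x n))\<^sup>2)"
    by (intro summable_mult) (simp add: mem_l2_iff)
  then show "c *\<^sub>R x \<in> l2"
    by (simp add: mem_l2_iff power_mult_distrib)
qed

lemma l2_lincomb: "x \<in> l2 \<Longrightarrow> y \<in> l2 \<Longrightarrow> a *\<^sub>R x + b *\<^sub>R y \<in> l2"
  by (intro subspace_add subspace_scale subspace_l2)

lemma l2_finite_support: "(\<And>n. N < n \<Longrightarrow> z n = 0) \<Longrightarrow> z \<in> l2"
  unfolding mem_l2_iff by (rule summable_finite[of "{..N}"]) (auto simp: not_le)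

lemma delta_in_l2: "delta n v \<in> l2"
  by (rule l2_finite_support[of n]) (simp add: delta_def)

lemma trunc_seq_in_l2: "trunc_seq N z \<in> l2"
  by (rule l2_finite_support[of N]) (simp add: trunc_seq_def restrict_seq_def)

lemma summable_l2_inner:
  assumes "x \<in> l2" "y \<in> l2"
  shows "summable (\<lambda>n. inner (x n) (y n))"
proof (rule summable_comparison_test'[where N = 0])
  show "summable (\<lambda>n. (norm (x n))\<^sup>2 + (norm (y n))\<^sup>2)"
    using assms by (intro summable_add) (simp_all add: mem_l2_iff)
  show "norm (inner (x n) (y n)) \<le> (norm (x n))\<^sup>2 + (norm (y n))\<^sup>2" for n
    using Cauchy_Schwarz_ineq2[of "x n" "y n"] sum_squares_bound[of "norm (x n)" "norm (y n)"]
      mult_nonneg_nonneg[of "norm (x n)" "norm (y n)"] by simp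
qed

lemma l2_inner_sums: "x \<in> l2 \<Longrightarrow> y \<in> l2 \<Longrightarrow> (\<lambda>n. inner (x n) (y n)) sums l2_inner x y"
  unfolding l2_inner_def by (intro summable_sums summable_l2_inner)

lemma l2_inner_self: "x \<in> l2 \<Longrightarrow> l2_inner x x = (l2_norm x)\<^sup>2"
  by (simp add: l2_inner_def l2_norm_def mem_l2_iff suminf_nonneg power2_norm_eq_inner)

lemma l2_norm_nonneg: "x \<in> l2 \<Longrightarrow> 0 \<le> l2_norm x"
  by (simp add: l2_norm_def mem_l2_iff suminf_nonneg)

interpretation l2: semi_inner_product_on l2 l2_inner
proof
  show "subspace l2" by (rule subspace_l2)
  show "l2_inner f g = l2_inner g f" for f g :: "'a seq"
    by (simp add: l2_inner_def inner_commute)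
  show "l2_inner (a *\<^sub>R f + b *\<^sub>R g) h = a * l2_inner f h + b * l2_inner g h"
    if "f \<in> l2" "g \<in> l2" "h \<in> l2" for f g h :: "'a seq" and a b
  proof -
    have "(\<lambda>n. a * inner (f n) (h n) + b * inner (g n) (h n)) sums (a * l2_inner f h + b * l2_inner g h)"
      using that by (intro sums_add sums_mult l2_inner_sums)
    then show ?thesis
      by (simp add: l2_inner_def inner_add_left sums_iff)
  qed
  show "f \<in> l2 \<Longrightarrow> 0 \<le> l2_inner f f" for f :: "'a seq"
    by (simp add: l2_inner_self)
qed

lemma l2_Cauchy_Schwarz: "x \<in> l2 \<Longrightarrow> y \<in> l2 \<Longrightarrow> \<bar>l2_inner x y\<bar> \<le> l2_norm x * l2_norm y"
  using l2.Cauchy_Schwarz[of x y] by (simp add: l2_inner_self l2_norm_nonneg)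

lemma l2_inner_self_eq_0: "x \<in> l2 \<Longrightarrow> l2_inner x x = 0 \<Longrightarrow> x = 0"
  by (auto simp: l2_inner_def mem_l2_iff suminf_eq_zero_iff power2_norm_eq_inner[symmetric]
      fun_eq_iff)

lemma l2_norm_scaleR: "x \<in> l2 \<Longrightarrow> l2_norm (c *\<^sub>R x) = \<bar>c\<bar> * l2_norm x"
  by (simp add: l2_norm_def power_mult_distrib suminf_mult mem_l2_iff real_sqrt_mult)

lemma l2_norm_delta: "l2_norm (delta n v) = norm v"
proof -
  have "(\<lambda>m. (norm (delta n v m))\<^sup>2) = (\<lambda>m. if m = n then (norm v)\<^sup>2 else 0)"
    by (auto simp: delta_def)
  then show ?thesis
    using sums_single[of n "\<lambda>_. (norm v)\<^sup>2"] by (simp add: l2_norm_def sums_iff)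
qed

lemma B2_subset_l2: "B2 \<subseteq> l2"
  by (auto simp: B2_def)

lemma l2_eq_scaleR_B2:
  assumes "x \<in> l2"
  obtains c b where "b \<in> B2" "x = c *\<^sub>R b"
proof
  have "0 < l2_norm x + 1" using l2_norm_nonneg[OF assms] by simp
  then show "(1 / (l2_norm x + 1)) *\<^sub>R x \<in> B2"
    using assms subspace_scale[OF subspace_l2 assms] by (simp add: B2_def l2_norm_scaleR)
  show "x = (l2_norm x + 1) *\<^sub>R (1 / (l2_norm x + 1)) *\<^sub>R x"
    using \<open>0 < l2_norm x + 1\<close> by simp
qed

lemma l2_norm_tail:
  assumes "z \<in> l2"
  shows "(\<lambda>N. l2_norm (z - trunc_seq N z)) \<longlonglongrightarrow> 0"
proof -
  define f where "f n = (norm (z n))\<^sup>2" for n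
  have "summable f" using assms by (simp add: f_def[abs_def] mem_l2_iff)
  have "(\<lambda>m. (norm ((z - trunc_seq N z) m))\<^sup>2) = (\<lambda>m. f m - (if m \<in> {..N} then f m else 0))" for N
    by (auto simp: f_def trunc_seq_def restrict_seq_def)
  moreover have "(\<lambda>m. f m - (if m \<in> {..N} then f m else 0)) sums (suminf f - (\<Sum>n\<le>N. f n))" for N
    using \<open>summable f\<close> by (intro sums_diff summable_sums sums_If_finite_set) auto
  ultimately have "l2_norm (z - trunc_seq N z) = sqrt (suminf f - (\<Sum>n\<le>N. f n))" for N
    by (simp add: l2_norm_def sums_iff)
  moreover have "(\<lambda>N. sqrt (suminf f - (\<Sum>n\<le>N. f n))) \<longlonglongrightarrow> sqrt (suminf f - suminf f)"
    using \<open>summable f\<close> by (intro tendsto_intros summable_LIMSEQ')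
  ultimately show ?thesis by simp
qed

definition l2_linear :: "('z::real_inner seq \<Rightarrow> real) \<Rightarrow> bool" where
  "l2_linear D \<longleftrightarrow> (\<forall>x\<in>l2. \<forall>y\<in>l2. \<forall>a b. D (a *\<^sub>R x + b *\<^sub>R y) = a * D x + b * D y)"

lemma l2_linear_add: "l2_linear D \<Longrightarrow> x \<in> l2 \<Longrightarrow> y \<in> l2 \<Longrightarrow> D (x + y) = D x + D y"
  unfolding l2_linear_def by (metis mult_1 scaleR_one)

lemma l2_linear_scaleR: "l2_linear D \<Longrightarrow> x \<in> l2 \<Longrightarrow> D (c *\<^sub>R x) = c * D x"
  unfolding l2_linear_def by (metis add.right_neutral mult_zero_left scaleR_zero_left)

lemma l2_linear_delta:
  assumes "l2_linear D"
  shows "linear (\<lambda>v. D (delta n v))"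
proof (rule linearI)
  have "delta n (v + w) = delta n v + delta n w" for v w :: 'a
    by (auto simp: delta_def)
  then show "D (delta n (v + w)) = D (delta n v) + D (delta n w)" for v w :: 'a
    using l2_linear_add[OF assms delta_in_l2 delta_in_l2] by simp
  have "delta n (c *\<^sub>R v) = c *\<^sub>R delta n v" for c and v :: 'a
    by (auto simp: delta_def)
  then show "D (delta n (c *\<^sub>R v)) = c *\<^sub>R D (delta n v)" for c and v :: 'a
    using l2_linear_scaleR[OF assms delta_in_l2] by simp
qed

lemma l2_linear_trunc_seq:
  assumes "l2_linear D"
  shows "D (trunc_seq N z) = (\<Sum>n\<le>N. D (delta n (z n)))"
proof (induction N)
  case 0
  have "trunc_seq 0 z = delta 0 (z 0)"
    by (auto simp: trunc_seq_def restrict_seq_def delta_def)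
  then show ?case by simp
next
  case (Suc N)
  have split: "trunc_seq (Suc N) z = 1 *\<^sub>R trunc_seq N z + 1 *\<^sub>R delta (Suc N) (z (Suc N))"
    by (auto simp: trunc_seq_def restrict_seq_def delta_def)
  have "D (trunc_seq (Suc N) z) = D (1 *\<^sub>R trunc_seq N z + 1 *\<^sub>R delta (Suc N) (z (Suc N)))"
    by (simp only: split)
  also have "\<dots> = 1 * D (trunc_seq N z) + 1 * D (delta (Suc N) (z (Suc N)))"
    using assms trunc_seq_in_l2 delta_in_l2 unfolding l2_linear_def by blast
  finally show ?case
    using Suc.IH by simp
qed

(* Landau's theorem; the test sequence a n / S n, with S n the partial sums of |a n|^2, comes
   from the Abel-Dini theorem. *)
lemma summable_inner_imp_l2:
  fixes a :: "'z::real_inner seq"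
  assumes "\<And>z. z \<in> l2 \<Longrightarrow> summable (\<lambda>n. inner (z n) (a n))"
  shows "a \<in> l2"
proof (rule ccontr)
  assume "a \<notin> l2"
  define b where "b n = (norm (a n))\<^sup>2" for n
  have b: "\<And>n. 0 \<le> b n" "\<not> summable b"
    using \<open>a \<notin> l2\<close> by (simp_all add: b_def[abs_def] mem_l2_iff)
  define z where "z n = (1 / (\<Sum>i\<le>n. b i)) *\<^sub>R a n" for n
  have "(norm (z n))\<^sup>2 = b n / (\<Sum>i\<le>n. b i)\<^sup>2" for n
    using b(1) by (simp add: z_def b_def sum_nonneg power_divide power_mult_distrib)
  then have "z \<in> l2"
    using summable_divide_partial_sums_squared[OF b] by (simp add: mem_l2_iff)
  then have "summable (\<lambda>n. inner (z n) (a n))"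
    by (rule assms)
  moreover have "inner (z n) (a n) = b n / (\<Sum>i\<le>n. b i)" for n
    by (simp add: z_def b_def power2_norm_eq_inner)
  ultimately have "summable (\<lambda>n. b n / (\<Sum>i\<le>n. b i))"
    by simp
  then show False
    using not_summable_divide_partial_sums[OF b] by contradiction
qed

lemma l2_functional_representation:
  fixes D :: "'z::{real_inner, complete_space} seq \<Rightarrow> real"
  assumes lin: "l2_linear D"
    and trunc: "\<And>z. z \<in> l2 \<Longrightarrow> (\<lambda>N. D (trunc_seq N z)) \<longlonglongrightarrow> D z"
    and coord: "\<And>n. bounded_linear (\<lambda>v. D (delta n v))"
  obtains a where "a \<in> l2" "\<And>z. z \<in> l2 \<Longrightarrow> D z = l2_inner z a"
proof -
  have "\<exists>a. \<forall>v. D (delta n v) = inner v a" for n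
    using riesz_representation[OF coord[of n]] by metis
  then obtain a where a: "\<And>n v. D (delta n v) = inner v (a n)"
    by metis
  have sums: "(\<lambda>n. inner (z n) (a n)) sums D z" if "z \<in> l2" for z
    unfolding sums_def_le using trunc[OF that] by (simp add: l2_linear_trunc_seq[OF lin] a)
  then have "a \<in> l2"
    by (intro summable_inner_imp_l2 sums_summable)
  moreover have "D z = l2_inner z a" if "z \<in> l2" for z
    using sums[OF that] by (simp add: l2_inner_def sums_iff)
  ultimately show ?thesis
    using that by blast
qed

definition riesz_map :: "'z::real_inner seq \<Rightarrow> 'z seq \<Rightarrow> real" where
  "riesz_map r = (\<lambda>z. if z \<in> l2 then l2_inner z r else 0)"

lemma mem_l2_dual_iff:
  "D \<in> l2_dual \<longleftrightarrow> (\<forall>z. z \<notin> l2 \<longrightarrow> D z = 0) \<and> l2_linear D \<and> (\<exists>C. \<forall>z\<in>l2. \<bar>D z\<bar> \<le> C * l2_norm z)"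
  by (simp add: l2_dual_def l2_linear_def)

lemma riesz_map_in_l2_dual:
  assumes "r \<in> l2"
  shows "riesz_map r \<in> l2_dual"
  unfolding mem_l2_dual_iff
proof (intro conjI allI impI)
  show "riesz_map r z = 0" if "z \<notin> l2" for z
    using that by (simp add: riesz_map_def)
  show "l2_linear (riesz_map r)"
    using assms by (simp add: l2_linear_def riesz_map_def l2_lincomb l2.linear_left)
  show "\<exists>C. \<forall>z\<in>l2. \<bar>riesz_map r z\<bar> \<le> C * l2_norm z"
    using l2_Cauchy_Schwarz[OF _ assms]
    by (intro exI[of _ "l2_norm r"]) (simp add: riesz_map_def mult.commute)
qed

lemma riesz_map_linear:
  assumes "r \<in> l2" "s \<in> l2"
  shows "riesz_map (a *\<^sub>R r + b *\<^sub>R s) = a *\<^sub>R riesz_map r + b *\<^sub>R riesz_map s"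
  using assms by (simp add: riesz_map_def fun_eq_iff l2.linear_right)

lemma riesz_rep_riesz_map:
  assumes "r \<in> l2"
  shows "riesz_rep (riesz_map r) = r"
  unfolding riesz_rep_def
proof (rule the_equality)
  show "r \<in> l2 \<and> (\<forall>z\<in>l2. riesz_map r z = l2_inner z r)"
    using assms by (simp add: riesz_map_def)
next
  fix s assume s: "s \<in> l2 \<and> (\<forall>z\<in>l2. riesz_map r z = l2_inner z s)"
  have "s - r \<in> l2" using s assms subspace_diff[OF subspace_l2] by blast
  then have "l2_inner (s - r) (s - r) = 0"
    using s assms by (simp add: l2.diff_right riesz_map_def)
  then show "s = r"
    using l2_inner_self_eq_0[OF \<open>s - r \<in> l2\<close>] by simp
qed

lemma l2_dual_eq_riesz_map:
  fixes D :: "'z::{real_inner, complete_space} seq \<Rightarrow> real"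
  assumes "D \<in> l2_dual"
  obtains r where "r \<in> l2" "D = riesz_map r"
proof -
  obtain C where out: "\<And>z. z \<notin> l2 \<Longrightarrow> D z = 0" and lin: "l2_linear D"
    and bound: "\<And>z. z \<in> l2 \<Longrightarrow> \<bar>D z\<bar> \<le> C * l2_norm z"
    using assms unfolding mem_l2_dual_iff by blast
  have "(\<lambda>N. D (trunc_seq N z)) \<longlonglongrightarrow> D z" if "z \<in> l2" for z
  proof (rule LIM_zero_cancel, rule Lim_null_comparison)
    have tail: "z - trunc_seq N z \<in> l2" for N
      using that trunc_seq_in_l2 subspace_diff[OF subspace_l2] by blast
    have "D (trunc_seq N z) - D z = - D (z - trunc_seq N z)" for N
      using l2_linear_add[OF lin trunc_seq_in_l2[of N z] tail[of N]] by simp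
    moreover note tail
    ultimately show "\<forall>\<^sub>F N in sequentially. norm (D (trunc_seq N z) - D z) \<le> C * l2_norm (z - trunc_seq N z)"
      using bound by (intro always_eventually allI) simp
    show "(\<lambda>N. C * l2_norm (z - trunc_seq N z)) \<longlonglongrightarrow> 0"
      using tendsto_mult_right_zero[OF l2_norm_tail[OF that]] by simp
  qed
  moreover have "bounded_linear (\<lambda>v. D (delta n v))" for n
    unfolding bounded_linear_def bounded_linear_axioms_def
    using l2_linear_delta[OF lin] bound[OF delta_in_l2]
    by (auto simp: l2_norm_delta mult.commute)
  ultimately obtain r where "r \<in> l2" "\<And>z. z \<in> l2 \<Longrightarrow> D z = l2_inner z r"
    using l2_functional_representation[OF lin] by blast
  then show ?thesis
    using that out by (auto simp: riesz_map_def fun_eq_iff)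
qed

lemma l2_ext_eqI:
  assumes out: "\<And>z. z \<notin> l2 \<Longrightarrow> G z = 0" and lin: "l2_linear G"
    and agree: "\<And>z. z \<in> B2 \<Longrightarrow> G z = f z"
  shows "l2_ext f = G"
  unfolding l2_ext_def l2_linear_def[symmetric]
proof (rule the_equality)
  show "(\<forall>z. z \<notin> l2 \<longrightarrow> G z = 0) \<and> l2_linear G \<and> (\<forall>z\<in>B2. G z = f z)"
    using assms by blast
next
  fix G' assume G': "(\<forall>z. z \<notin> l2 \<longrightarrow> G' z = 0) \<and> l2_linear G' \<and> (\<forall>z\<in>B2. G' z = f z)"
  show "G' = G"
  proof
    fix z
    show "G' z = G z"
    proof (cases "z \<in> l2")
      case True
      then obtain c b where "b \<in> B2" "z = c *\<^sub>R b" by (rule l2_eq_scaleR_B2)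
      then show ?thesis
        using G' lin agree B2_subset_l2 l2_linear_scaleR by (metis subsetD)
    qed (use G' out in simp)
  qed
qed

lemma l2_ext_eq_riesz_map:
  assumes "a \<in> l2" "\<And>b. b \<in> B2 \<Longrightarrow> f b = l2_inner b a"
  shows "l2_ext f = riesz_map a"
  using riesz_map_in_l2_dual[OF assms(1)] assms B2_subset_l2
  by (intro l2_ext_eqI) (auto simp: mem_l2_dual_iff riesz_map_def)

section \<open>Reproducing kernel Hilbert spaces of a feature map\<close>

locale feature_rkhs =
  fixes X :: "'a set" and H :: "'a \<Rightarrow> 'y::real_inner"
    and F :: "('a \<Rightarrow> real) set" and ip :: "('a \<Rightarrow> real) \<Rightarrow> ('a \<Rightarrow> real) \<Rightarrow> real"
  assumes RKHS: "is_RKHS X (\<lambda>x y. inner (H x) (H y)) F ip"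
begin

sublocale F: semi_inner_product_on F ip
  using RKHS unfolding is_RKHS_def by unfold_locales (elim conjE; simp)+

definition feature_section :: "'y \<Rightarrow> 'a \<Rightarrow> real" where
  "feature_section w = (\<lambda>x. if x \<in> X then inner (H x) w else 0)"

lemma vanishes_outside: "f \<in> F \<Longrightarrow> x \<notin> X \<Longrightarrow> f x = 0"
  using RKHS unfolding is_RKHS_def by (elim conjE) simp

lemma feature_section_H_in_F: "x \<in> X \<Longrightarrow> feature_section (H x) \<in> F"
  using RKHS unfolding is_RKHS_def feature_section_def by (elim conjE) simp

lemma reproducing: "f \<in> F \<Longrightarrow> x \<in> X \<Longrightarrow> f x = ip f (feature_section (H x))"
  using RKHS unfolding is_RKHS_def feature_section_def by (elim conjE) simp

lemma linear_feature_section: "linear feature_section"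
  by (rule linearI) (simp_all add: feature_section_def fun_eq_iff inner_add_right)

lemma feature_section_in_F:
  assumes "w \<in> span (H ` X)"
  shows "feature_section w \<in> F"
proof -
  have "span (H ` X) \<subseteq> feature_section -` F"
    using feature_section_H_in_F
    by (intro span_minimal linear_subspace_vimage[OF linear_feature_section F.subspace]) auto
  then show ?thesis using assms by blast
qed

lemma ip_feature_section:
  assumes v: "v \<in> span (H ` X)" and w: "w \<in> span (H ` X)"
  shows "ip (feature_section v) (feature_section w) = inner v w"
proof -
  define T where "T = {v \<in> span (H ` X). ip (feature_section v) (feature_section w) = inner v w}"
  have fw: "feature_section w \<in> F" by (rule feature_section_in_F[OF w])
  have T_lincomb: "a *\<^sub>R x + b *\<^sub>R y \<in> T" if "x \<in> T" "y \<in> T" for a b x y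
  proof -
    have "x \<in> span (H ` X)" "y \<in> span (H ` X)" using that by (auto simp: T_def)
    then have "ip (a *\<^sub>R feature_section x + b *\<^sub>R feature_section y) (feature_section w)
        = a * ip (feature_section x) (feature_section w) + b * ip (feature_section y) (feature_section w)"
      using F.linear_left feature_section_in_F fw by blast
    then show ?thesis
      using that \<open>x \<in> span (H ` X)\<close> \<open>y \<in> span (H ` X)\<close>
      by (simp add: T_def span_add span_scale inner_add_left linear_add[OF linear_feature_section]
          linear_scale[OF linear_feature_section])
  qed
  have "0 \<in> T"
    using F.linear_left[OF fw fw fw, of 0 0]
    by (simp add: T_def span_zero linear_0[OF linear_feature_section])
  then have "subspace T"
    unfolding subspace_def using T_lincomb[of _ _ 1 1] T_lincomb[of _ _ _ 0] by simp
  moreover have "H ` X \<subseteq> T"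
  proof
    fix u assume "u \<in> H ` X"
    then obtain x where "x \<in> X" "u = H x" by blast
    then have "ip (feature_section u) (feature_section w) = feature_section w x"
      using reproducing[OF fw \<open>x \<in> X\<close>] F.sym[OF fw feature_section_H_in_F] by simp
    then show "u \<in> T"
      using \<open>x \<in> X\<close> \<open>u = H x\<close> by (simp add: T_def span_base feature_section_def)
  qed
  ultimately have "span (H ` X) \<subseteq> T" by (simp add: span_minimal)
  then show ?thesis using v by (auto simp: T_def)
qed

lemma ip_feature_section_le:
  assumes "f \<in> F" "w \<in> span (H ` X)"
  shows "\<bar>ip f (feature_section w)\<bar> \<le> sqrt (ip f f) * norm w"
  using F.Cauchy_Schwarz[OF assms(1) feature_section_in_F[OF assms(2)]]
  by (simp add: ip_feature_section[OF assms(2) assms(2)] norm_eq_sqrt_inner)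

lemma eval_lipschitz:
  assumes "f \<in> F" "x \<in> X" "y \<in> X"
  shows "\<bar>f x - f y\<bar> \<le> sqrt (ip f f) * dist (H x) (H y)"
proof -
  have "H x - H y \<in> span (H ` X)"
    using assms by (intro span_diff span_base) auto
  moreover have "f x - f y = ip f (feature_section (H x - H y))"
    using reproducing[OF assms(1,2)] reproducing[OF assms(1,3)]
      F.diff_right[OF feature_section_H_in_F[OF assms(2)] feature_section_H_in_F[OF assms(3)] assms(1)]
    by (simp add: linear_diff[OF linear_feature_section])
  ultimately show ?thesis
    using ip_feature_section_le[OF assms(1)] by (simp add: dist_norm)
qed

end

locale rkhs_of_linear_functional = feature_rkhs Zs H F ip
  for Zs :: "'z::{real_inner, complete_space} seq set"
    and H :: "'z seq \<Rightarrow> 'y::real_inner"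
    and F :: "('z seq \<Rightarrow> real) set"
    and ip :: "('z seq \<Rightarrow> real) \<Rightarrow> ('z seq \<Rightarrow> real) \<Rightarrow> real" +
  fixes L :: "'z seq \<Rightarrow> 'y"
  assumes standing: "standing_assumption Zs"
    and B2_subset: "B2 \<subseteq> Zs"
    and fmp: "minimal_FMP Zs H"
    and mcont: "minimally_continuous H"
    and L_linear: "\<forall>x\<in>span Zs. \<forall>y\<in>span Zs. \<forall>a b. L (a *\<^sub>R x + b *\<^sub>R y) = a *\<^sub>R L x + b *\<^sub>R L y"
    and H_eq_L: "\<forall>z\<in>Zs. H z = L z"
begin

lemma l2_subset_span: "l2 \<subseteq> span Zs"
proof
  fix x :: "'z seq" assume "x \<in> l2"
  then obtain c b where "b \<in> B2" "x = c *\<^sub>R b" by (rule l2_eq_scaleR_B2)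
  then show "x \<in> span Zs"
    using B2_subset by (auto intro: span_scale span_base)
qed

lemma L_lincomb: "x \<in> l2 \<Longrightarrow> y \<in> l2 \<Longrightarrow> L (a *\<^sub>R x + b *\<^sub>R y) = a *\<^sub>R L x + b *\<^sub>R L y"
  using L_linear l2_subset_span by blast

lemma L_scaleR: "x \<in> l2 \<Longrightarrow> L (c *\<^sub>R x) = c *\<^sub>R L x"
  using L_lincomb[of x x c 0] by simp

lemma L_diff: "x \<in> l2 \<Longrightarrow> y \<in> l2 \<Longrightarrow> L (x - y) = L x - L y"
  using L_lincomb[of x y 1 "-1"] by simp

lemma L_in_span_H_B2:
  assumes "x \<in> l2"
  shows "L x \<in> span (H ` B2)"
proof -
  obtain c b where b: "b \<in> B2" and x: "x = c *\<^sub>R b"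
    using assms by (rule l2_eq_scaleR_B2)
  have "b \<in> Zs" "b \<in> l2"
    using b B2_subset B2_subset_l2 by auto
  then have "L x = c *\<^sub>R H b"
    using x L_scaleR H_eq_L by simp
  then show ?thesis
    using b by (simp add: span_scale span_base)
qed

lemma L_in_span_H: "x \<in> l2 \<Longrightarrow> L x \<in> span (H ` Zs)"
  using L_in_span_H_B2 span_mono[OF image_mono[OF B2_subset]] by blast

lemma trunc_seq_in_Zs: "z \<in> Zs \<Longrightarrow> trunc_seq N z \<in> Zs"
  using standing unfolding standing_assumption_def trunc_seq_def by (elim conjE) simp

lemma H_trunc_seq_tendsto: "z \<in> Zs \<Longrightarrow> (\<lambda>N. H (trunc_seq N z)) \<longlonglongrightarrow> H z"
  using fmp unfolding minimal_FMP_def by blast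

lemma L_trunc_seq_tendsto:
  assumes "x \<in> l2"
  shows "(\<lambda>N. L (trunc_seq N x)) \<longlonglongrightarrow> L x"
proof -
  obtain c b where b: "b \<in> B2" and x: "x = c *\<^sub>R b"
    using assms by (rule l2_eq_scaleR_B2)
  have "b \<in> Zs" "b \<in> l2" using b B2_subset B2_subset_l2 by auto
  have "L (trunc_seq N x) = c *\<^sub>R H (trunc_seq N b)" for N
  proof -
    have "trunc_seq N x = c *\<^sub>R trunc_seq N b"
      by (auto simp: x trunc_seq_def restrict_seq_def)
    then show ?thesis
      using L_scaleR[OF trunc_seq_in_l2] H_eq_L trunc_seq_in_Zs[OF \<open>b \<in> Zs\<close>] by simp
  qed
  moreover have "L x = c *\<^sub>R H b"
    using x L_scaleR[OF \<open>b \<in> l2\<close>] H_eq_L \<open>b \<in> Zs\<close> by simp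
  ultimately show ?thesis
    using H_trunc_seq_tendsto[OF \<open>b \<in> Zs\<close>] by (simp add: tendsto_scaleR)
qed

lemma bounded_linear_L_delta: "bounded_linear (\<lambda>v. L (delta n v))"
proof (rule bounded_linear_if_continuous_on_cball)
  show "linear (\<lambda>v. L (delta n v))"
  proof (rule linearI)
    fix v w :: 'z
    have "delta n (v + w) = 1 *\<^sub>R delta n v + 1 *\<^sub>R delta n w"
      by (auto simp: delta_def)
    then have "L (delta n (v + w)) = 1 *\<^sub>R L (delta n v) + 1 *\<^sub>R L (delta n w)"
      by (simp only: L_lincomb[OF delta_in_l2 delta_in_l2])
    then show "L (delta n (v + w)) = L (delta n v) + L (delta n w)"
      by simp
  next
    fix c and v :: 'z
    have "delta n (c *\<^sub>R v) = c *\<^sub>R delta n v"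
      by (auto simp: delta_def)
    then show "L (delta n (c *\<^sub>R v)) = c *\<^sub>R L (delta n v)"
      by (simp only: L_scaleR[OF delta_in_l2])
  qed
  have "delta n v \<in> Zs" if "v \<in> cball 0 1" for v
    using standing that unfolding standing_assumption_def by (elim conjE) simp
  then have H_eq: "(H \<circ> delta n) v = L (delta n v)" if "v \<in> cball 0 1" for v
    using H_eq_L that by simp
  have "continuous_on (cball 0 1) (H \<circ> delta n)"
    using mcont unfolding minimally_continuous_def by blast
  then show "continuous_on (cball 0 1) (\<lambda>v. L (delta n v))"
    by (rule continuous_on_eq) (rule H_eq)
qed

(* The reproducing formula f x = ip f (feature_section (H x)) with L x in place of H x, which
   makes sense, and is linear, on all of l2. *)
definition kernel_extension :: "('z seq \<Rightarrow> real) \<Rightarrow> 'z seq \<Rightarrow> real" where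
  "kernel_extension f x = ip f (feature_section (L x))"

lemma feature_section_L_in_F: "x \<in> l2 \<Longrightarrow> feature_section (L x) \<in> F"
  by (intro feature_section_in_F L_in_span_H)

lemma l2_linear_kernel_extension:
  assumes "f \<in> F"
  shows "l2_linear (kernel_extension f)"
  unfolding l2_linear_def kernel_extension_def
  using assms feature_section_L_in_F
  by (simp add: L_lincomb linear_add[OF linear_feature_section] linear_scale[OF linear_feature_section]
      F.linear_right)

lemma kernel_extension_eq: "f \<in> F \<Longrightarrow> x \<in> l2 \<Longrightarrow> x \<in> Zs \<Longrightarrow> kernel_extension f x = f x"
  using reproducing H_eq_L by (simp add: kernel_extension_def)

lemma kernel_extension_le:
  "f \<in> F \<Longrightarrow> x \<in> l2 \<Longrightarrow> \<bar>kernel_extension f x\<bar> \<le> sqrt (ip f f) * norm (L x)"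
  unfolding kernel_extension_def by (intro ip_feature_section_le L_in_span_H)

lemma kernel_extension_trunc_seq_tendsto:
  assumes "f \<in> F" "x \<in> l2"
  shows "(\<lambda>N. kernel_extension f (trunc_seq N x)) \<longlonglongrightarrow> kernel_extension f x"
proof (rule LIM_zero_cancel, rule Lim_null_comparison)
  have tail: "trunc_seq N x - x \<in> l2" for N
    using subspace_diff[OF subspace_l2 trunc_seq_in_l2 assms(2)] .
  have "kernel_extension f (trunc_seq N x) - kernel_extension f x
      = kernel_extension f (trunc_seq N x - x)" for N
    using l2_linear_add[OF l2_linear_kernel_extension[OF assms(1)] tail assms(2), of N] by simp
  then show "\<forall>\<^sub>F N in sequentially. norm (kernel_extension f (trunc_seq N x) - kernel_extension f x)
      \<le> sqrt (ip f f) * norm (L (trunc_seq N x) - L x)"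
    using kernel_extension_le[OF assms(1) tail] L_diff[OF trunc_seq_in_l2 assms(2)]
    by (intro always_eventually allI) simp
  have "(\<lambda>N. L (trunc_seq N x) - L x) \<longlonglongrightarrow> 0"
    using L_trunc_seq_tendsto[OF assms(2)] by (rule LIM_zero)
  then show "(\<lambda>N. sqrt (ip f f) * norm (L (trunc_seq N x) - L x)) \<longlonglongrightarrow> 0"
    by (intro tendsto_mult_right_zero tendsto_norm_zero)
qed

lemma bounded_linear_kernel_extension_delta:
  assumes "f \<in> F"
  shows "bounded_linear (\<lambda>v. kernel_extension f (delta n v))"
proof -
  obtain K where K: "\<And>v. norm (L (delta n v)) \<le> norm v * K"
    using bounded_linear.bounded[OF bounded_linear_L_delta] by blast
  have "norm (kernel_extension f (delta n v)) \<le> norm v * (sqrt (ip f f) * K)" for v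
  proof -
    have "\<bar>kernel_extension f (delta n v)\<bar> \<le> sqrt (ip f f) * norm (L (delta n v))"
      by (rule kernel_extension_le[OF assms delta_in_l2])
    also have "\<dots> \<le> sqrt (ip f f) * (norm v * K)"
      by (rule mult_left_mono[OF K]) (simp add: F.nonneg[OF assms])
    finally show ?thesis by (simp add: mult_ac)
  qed
  then have "bounded_linear_axioms (\<lambda>v. kernel_extension f (delta n v))"
    unfolding bounded_linear_axioms_def by blast
  then show ?thesis
    using l2_linear_delta[OF l2_linear_kernel_extension[OF assms]] by (simp add: bounded_linear_def)
qed

lemma F_on_B2_representation:
  assumes "f \<in> F"
  obtains a where "a \<in> l2" "\<And>b. b \<in> B2 \<Longrightarrow> f b = l2_inner b a"
proof -
  obtain a where "a \<in> l2" and a: "\<And>x. x \<in> l2 \<Longrightarrow> kernel_extension f x = l2_inner x a"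
    using l2_functional_representation[OF l2_linear_kernel_extension[OF assms]
        kernel_extension_trunc_seq_tendsto[OF assms] bounded_linear_kernel_extension_delta[OF assms]]
    by blast
  moreover have "f b = l2_inner b a" if "b \<in> B2" for b
  proof -
    have "b \<in> l2" "b \<in> Zs" using that B2_subset B2_subset_l2 by auto
    then show ?thesis using kernel_extension_eq[OF assms] a by metis
  qed
  ultimately show ?thesis
    using that by blast
qed

lemma F_trunc_seq_tendsto:
  assumes "f \<in> F" "z \<in> Zs"
  shows "(\<lambda>N. f (trunc_seq N z)) \<longlonglongrightarrow> f z"
proof (rule LIM_zero_cancel, rule Lim_null_comparison)
  show "\<forall>\<^sub>F N in sequentially. norm (f (trunc_seq N z) - f z) \<le> sqrt (ip f f) * dist (H (trunc_seq N z)) (H z)"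
    using eval_lipschitz[OF assms(1) trunc_seq_in_Zs[OF assms(2)] assms(2)]
    by (intro always_eventually allI) simp
  show "(\<lambda>N. sqrt (ip f f) * dist (H (trunc_seq N z)) (H z)) \<longlonglongrightarrow> 0"
    using tendsto_dist[OF H_trunc_seq_tendsto[OF assms(2)] tendsto_const[of "H z"]]
    by (intro tendsto_mult_right_zero) simp
qed

lemma F_eq_0_if_vanishes_on_B2:
  assumes "f \<in> F" and B2_0: "\<And>b. b \<in> B2 \<Longrightarrow> f b = 0"
  shows "f = 0"
proof
  fix z
  have "kernel_extension f x = 0" if "x \<in> l2" for x
  proof -
    obtain c b where "b \<in> B2" "x = c *\<^sub>R b"
      using \<open>x \<in> l2\<close> by (rule l2_eq_scaleR_B2)
    moreover have "b \<in> l2" "b \<in> Zs"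
      using \<open>b \<in> B2\<close> B2_subset B2_subset_l2 by auto
    ultimately show ?thesis
      using l2_linear_scaleR[OF l2_linear_kernel_extension[OF assms(1)]] kernel_extension_eq[OF assms(1)]
        B2_0 by simp
  qed
  then have "f (trunc_seq N z) = 0" if "z \<in> Zs" for N
    using kernel_extension_eq[OF assms(1) trunc_seq_in_l2 trunc_seq_in_Zs[OF that]]
    by (simp add: trunc_seq_in_l2)
  show "f z = 0 z"
  proof (cases "z \<in> Zs")
    case True
    then have "(\<lambda>N. 0) \<longlonglongrightarrow> f z"
      using F_trunc_seq_tendsto[OF assms(1) True] \<open>z \<in> Zs \<Longrightarrow> f (trunc_seq _ z) = 0\<close> by simp
    then have "0 = f z"
      by (rule LIMSEQ_unique[OF tendsto_const])
    then show ?thesis by simp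
  qed (simp add: vanishes_outside[OF assms(1)])
qed

lemma l2_ext_representation:
  assumes "f \<in> F"
  obtains a where "a \<in> l2" "l2_ext f = riesz_map a" "\<And>b. b \<in> B2 \<Longrightarrow> f b = l2_inner b a"
  using F_on_B2_representation[OF assms] l2_ext_eq_riesz_map by metis

lemma l2_ext_in_l2_dual: "f \<in> F \<Longrightarrow> l2_ext f \<in> l2_dual"
  by (metis l2_ext_representation riesz_map_in_l2_dual)

lemma l2_ext_lincomb:
  assumes "f \<in> F" "g \<in> F"
  shows "l2_ext (\<alpha> *\<^sub>R f + \<beta> *\<^sub>R g) = \<alpha> *\<^sub>R l2_ext f + \<beta> *\<^sub>R l2_ext g"
proof -
  obtain a where a: "a \<in> l2" "l2_ext f = riesz_map a" "\<And>b. b \<in> B2 \<Longrightarrow> f b = l2_inner b a"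
    using l2_ext_representation[OF assms(1)] by blast
  obtain c where c: "c \<in> l2" "l2_ext g = riesz_map c" "\<And>b. b \<in> B2 \<Longrightarrow> g b = l2_inner b c"
    using l2_ext_representation[OF assms(2)] by blast
  have "(\<alpha> *\<^sub>R f + \<beta> *\<^sub>R g) b = l2_inner b (\<alpha> *\<^sub>R a + \<beta> *\<^sub>R c)" if "b \<in> B2" for b
    using that a c B2_subset_l2 by (auto simp: l2.linear_right)
  then have "l2_ext (\<alpha> *\<^sub>R f + \<beta> *\<^sub>R g) = riesz_map (\<alpha> *\<^sub>R a + \<beta> *\<^sub>R c)"
    using a c by (intro l2_ext_eq_riesz_map l2_lincomb)
  then show ?thesis
    using a c by (simp add: riesz_map_linear)
qed

lemma inj_on_l2_ext: "inj_on l2_ext F"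
proof (rule inj_onI)
  fix f g assume "f \<in> F" "g \<in> F" and eq: "l2_ext f = l2_ext g"
  obtain a where a: "l2_ext f = riesz_map a" "\<And>b. b \<in> B2 \<Longrightarrow> f b = l2_inner b a"
    using l2_ext_representation[OF \<open>f \<in> F\<close>] by blast
  obtain c where c: "l2_ext g = riesz_map c" "\<And>b. b \<in> B2 \<Longrightarrow> g b = l2_inner b c"
    using l2_ext_representation[OF \<open>g \<in> F\<close>] by blast
  have "(f - g) b = 0" if "b \<in> B2" for b
  proof -
    have "riesz_map a b = riesz_map c b"
      using eq a c by simp
    then have "l2_inner b a = l2_inner b c"
      using that B2_subset_l2 by (auto simp: riesz_map_def)
    then show ?thesis
      using that a c by simp
  qed
  then have "f - g = 0"
    using F_eq_0_if_vanishes_on_B2 subspace_diff[OF F.subspace \<open>f \<in> F\<close> \<open>g \<in> F\<close>] by blast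
  then show "f = g" by simp
qed

lemma span_H_B2_subset: "span (H ` B2) \<subseteq> closure (span (H ` Zs))"
  using span_mono[OF image_mono[OF B2_subset]] closure_subset by blast

lemma closure_span_H_subset: "closure (span (H ` Zs)) \<subseteq> closure (span (H ` B2))"
proof (rule closure_minimal[OF _ closed_closure], rule span_minimal)
  show "H ` Zs \<subseteq> closure (span (H ` B2))"
  proof
    fix y assume "y \<in> H ` Zs"
    then obtain z where "z \<in> Zs" "y = H z" by blast
    have "H (trunc_seq N z) \<in> span (H ` B2)" for N
      using L_in_span_H_B2[OF trunc_seq_in_l2] H_eq_L trunc_seq_in_Zs[OF \<open>z \<in> Zs\<close>] by simp
    then show "y \<in> closure (span (H ` B2))"
      unfolding closure_sequential \<open>y = H z\<close>
      using H_trunc_seq_tendsto[OF \<open>z \<in> Zs\<close>]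
      by (intro exI[of _ "\<lambda>N. H (trunc_seq N z)"] conjI allI)
  qed
  show "subspace (closure (span (H ` B2)))"
    by (intro subspace_closure subspace_span)
qed

context
  assumes isometric_on_B2: "\<forall>z1\<in>B2. \<forall>z2\<in>B2. inner (H z1) (H z2) = l2_inner z1 z2"
begin

lemma inner_L_eq_l2_inner:
  assumes "x \<in> l2" "y \<in> l2"
  shows "inner (L x) (L y) = l2_inner x y"
proof -
  obtain c b where b: "b \<in> B2" and x: "x = c *\<^sub>R b"
    using assms(1) by (rule l2_eq_scaleR_B2)
  obtain d b' where b': "b' \<in> B2" and y: "y = d *\<^sub>R b'"
    using assms(2) by (rule l2_eq_scaleR_B2)
  have "b \<in> l2" "b' \<in> l2" "L b = H b" "L b' = H b'"
    using b b' B2_subset B2_subset_l2 H_eq_L by auto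
  have "l2_inner x y = c * (d * l2_inner b b')"
    using l2.scaleR_left[OF \<open>b \<in> l2\<close> subspace_scale[OF subspace_l2 \<open>b' \<in> l2\<close>]]
      l2.scaleR_right[OF \<open>b' \<in> l2\<close> \<open>b \<in> l2\<close>]
    by (simp add: x y)
  moreover have "inner (L x) (L y) = c * (d * inner (H b) (H b'))"
    using L_scaleR[OF \<open>b \<in> l2\<close>] L_scaleR[OF \<open>b' \<in> l2\<close>] \<open>L b = H b\<close> \<open>L b' = H b'\<close>
    by (simp add: x y)
  ultimately show ?thesis
    using isometric_on_B2 b b' by simp
qed

lemma l2_ext_feature_section_L:
  assumes "r \<in> l2"
  shows "l2_ext (feature_section (L r)) = riesz_map r"
proof (rule l2_ext_eq_riesz_map[OF assms])
  fix b :: "'z seq" assume "b \<in> B2"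
  then have "b \<in> Zs" "b \<in> l2" using B2_subset B2_subset_l2 by auto
  then show "feature_section (L r) b = l2_inner b r"
    using inner_L_eq_l2_inner[OF _ assms] H_eq_L by (simp add: feature_section_def)
qed

lemma bij_betw_l2_ext: "bij_betw l2_ext F l2_dual"
  unfolding bij_betw_def
proof (intro conjI inj_on_l2_ext subset_antisym)
  show "l2_ext ` F \<subseteq> l2_dual"
    using l2_ext_in_l2_dual by blast
  show "l2_dual \<subseteq> l2_ext ` F"
  proof
    fix D :: "'z seq \<Rightarrow> real" assume "D \<in> l2_dual"
    then obtain r where "r \<in> l2" "D = riesz_map r"
      by (rule l2_dual_eq_riesz_map)
    then show "D \<in> l2_ext ` F"
      using l2_ext_feature_section_L feature_section_L_in_F by (metis image_eqI)
  qed
qed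

lemma l2_dual_inner_l2_ext:
  assumes "f \<in> F" "g \<in> F"
  shows "l2_dual_inner (l2_ext f) (l2_ext g) = ip f g"
proof -
  obtain a where a: "a \<in> l2" "l2_ext f = riesz_map a"
    using l2_ext_representation[OF assms(1)] by blast
  obtain c where c: "c \<in> l2" "l2_ext g = riesz_map c"
    using l2_ext_representation[OF assms(2)] by blast
  have "f = feature_section (L a)" "g = feature_section (L c)"
    using inj_on_l2_ext assms feature_section_L_in_F a c l2_ext_feature_section_L
    by (metis inj_onD)+
  then show ?thesis
    using a c by (simp add: l2_dual_inner_def riesz_rep_riesz_map ip_feature_section L_in_span_H inner_L_eq_l2_inner)
qed

lemma inner_L_functional_in_l2_dual: "(\<lambda>z. if z \<in> l2 then inner (L z) y else 0) \<in> l2_dual"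
  unfolding mem_l2_dual_iff l2_linear_def
proof (intro conjI allI impI ballI exI)
  show "\<bar>if z \<in> l2 then inner (L z) y else 0\<bar> \<le> norm y * l2_norm z" if "z \<in> l2" for z
  proof -
    have "norm (L z) = l2_norm z"
      using inner_L_eq_l2_inner[OF that that] l2_inner_self[OF that] l2_norm_nonneg[OF that]
      by (simp add: norm_eq_sqrt_inner)
    then show ?thesis
      using that Cauchy_Schwarz_ineq2[of "L z" y] by (simp add: mult.commute)
  qed
qed (auto simp: l2_lincomb L_lincomb inner_add_left)

lemma span_H_B2_eq_closure: "span (H ` B2) = closure (span (H ` Zs))"
proof (rule subset_antisym[OF span_H_B2_subset], rule subsetI)
  fix y assume "y \<in> closure (span (H ` Zs))"
  then have y: "y \<in> closure (span (H ` B2))"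
    using closure_span_H_subset by blast
  obtain r where "r \<in> l2" and r: "(\<lambda>z. if z \<in> l2 then inner (L z) y else 0) = riesz_map r"
    using l2_dual_eq_riesz_map[OF inner_L_functional_in_l2_dual] by blast
  have "inner h (y - L r) = 0" if h: "h \<in> H ` B2" for h
  proof -
    obtain b where "b \<in> B2" "h = H b" using h by blast
    then have "b \<in> l2" "h = L b" using B2_subset B2_subset_l2 H_eq_L by auto
    then have "inner h y = l2_inner b r"
      using fun_cong[OF r, of b] by (simp add: riesz_map_def)
    then show ?thesis
      using inner_L_eq_l2_inner[OF \<open>b \<in> l2\<close> \<open>r \<in> l2\<close>] \<open>h = L b\<close> by (simp add: inner_diff_right)
  qed
  moreover have "L r \<in> closure (span (H ` B2))"
    using L_in_span_H_B2[OF \<open>r \<in> l2\<close>] closure_subset by blast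
  \<comment> \<open>y - L r is orthogonal to the closed span, which contains both y and L r\<close>
  ultimately have "inner y (y - L r) = 0" "inner (L r) (y - L r) = 0"
    using y orthogonal_closure_span by blast+
  then have "inner (y - L r) (y - L r) = 0"
    by (simp add: inner_diff_left)
  then show "y \<in> span (H ` B2)"
    using L_in_span_H_B2[OF \<open>r \<in> l2\<close>] by simp
qed

end

end

theorem proposition4p2:
  fixes Zs :: "('z::{real_inner, complete_space}) seq set"
    and H :: "'z seq \<Rightarrow> 'y::{real_inner, complete_space}"
    and F :: "('z seq \<Rightarrow> real) set"
    and ip :: "('z seq \<Rightarrow> real) \<Rightarrow> ('z seq \<Rightarrow> real) \<Rightarrow> real"
  assumes std: "standing_assumption Zs"
    and B2_sub: "B2 \<subseteq> Zs"
    and lin: "linear_functional Zs H"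
    and fmp: "minimal_FMP Zs H"
    and mcont: "minimally_continuous H"
    and rkhs: "is_RKHS Zs (\<lambda>z1 z2. inner (H z1) (H z2)) F ip"
  shows "(\<forall>f\<in>F. l2_ext f \<in> l2_dual)
       \<and> (\<forall>f\<in>F. \<forall>g\<in>F. \<forall>a b. l2_ext (a *\<^sub>R f + b *\<^sub>R g) = a *\<^sub>R l2_ext f + b *\<^sub>R l2_ext g)
       \<and> inj_on l2_ext F
       \<and> span (H ` B2) \<subseteq> closure (span (H ` Zs))
       \<and> closure (span (H ` Zs)) \<subseteq> closure (span (H ` B2))
       \<and> ((\<forall>z1\<in>B2. \<forall>z2\<in>B2. inner (H z1) (H z2) = l2_inner z1 z2) \<longrightarrow>
            bij_betw l2_ext F l2_dual
          \<and> (\<forall>f\<in>F. \<forall>g\<in>F. l2_dual_inner (l2_ext f) (l2_ext g) = ip f g)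
          \<and> span (H ` B2) = closure (span (H ` Zs)))"
proof -
  obtain L where "\<forall>x\<in>span Zs. \<forall>y\<in>span Zs. \<forall>a b. L (a *\<^sub>R x + b *\<^sub>R y) = a *\<^sub>R L x + b *\<^sub>R L y"
    and "\<forall>z\<in>Zs. H z = L z"
    using lin unfolding linear_functional_def by blast
  then interpret rkhs_of_linear_functional Zs H F ip L
    using std B2_sub fmp mcont rkhs by unfold_locales
  show ?thesis
    using l2_ext_in_l2_dual l2_ext_lincomb inj_on_l2_ext span_H_B2_subset closure_span_H_subset
      bij_betw_l2_ext l2_dual_inner_l2_ext span_H_B2_eq_closure
    by blast
qed

end
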